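(* Let $q$ be an odd prime power, $d\ge 2$ an even integer, and $A\subset\mathbb F_q^d$. Let $\mathcal{SQ}(A)$ be the number of pairs $(x,y)\in A\times A$ such that $\eta(\|x-y\|)=1$. Then $$\mathcal{SQ}(A)\le \frac{|A|^2}{2}+\frac{q^{\frac d2}}{2}|A|-\frac{|A|^2}{2q^{\frac d2}}-\frac{|A|}{2}.$$
   Context: For $x,y\in\mathbb F_q^d$, $\|x-y\|:=(x_1-y_1)^2+\cdots+(x_d-y_d)^2\in\mathbb F_q$. $\eta$ denotes the quadratic character of $\mathbb F_q$ with the convention $\eta(0)=0$. *)

theory Defs
  imports "HOL-Analysis.Finite_Cartesian_Product"
begin

definition qchar :: "'a::{field,finite} \<Rightarrow> int" where
  "qchar a = (if a = 0 then 0 else if (\<exists>b. b * b = a) then 1 else -1)"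

definition qdist :: "'a::{field,finite} ^ 'n \<Rightarrow> 'a ^ 'n \<Rightarrow> 'a" where
  "qdist x y = (\<Sum>i\<in>UNIV. (x $ i - y $ i)^2)"

definition SQ :: "('a::{field,finite} ^ 'n) set \<Rightarrow> nat" where
  "SQ A = card {(x, y). x \<in> A \<and> y \<in> A \<and> qchar (qdist x y) = 1}"

end

theory Submission
  imports Defs "HOL-Computational_Algebra.Primes" "HOL-Computational_Algebra.Group_Closure"
begin

text \<open>
  Fix a non-trivial additive character \<open>\<psi>\<close> of \<open>F\<^sub>q\<close> (one exists since \<open>F\<^sub>q\<close> has an additive subgroup
  of index \<open>p\<close>). For \<open>f v = \<eta> (qnorm v)\<close>, Fourier inversion on \<open>F\<^sub>q\<^sup>d\<close> writes
  \<open>\<Sum>x\<in>A. \<Sum>y\<in>A. f (x - y)\<close> as \<open>q\<^sup>-\<^sup>d \<Sum>m. fourier f m * |char_sum A m|\<^sup>2\<close>. Expressing \<open>\<eta>\<close> through the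
  Gauss sum \<open>G\<close> and completing squares gives \<open>fourier f m = \<eta> (- qnorm m / 4) * G\<^sup>d\<close> for even \<open>d\<close>;
  as \<open>|G| = \<surd>q\<close>, this is bounded by \<open>q\<^sup>d\<^sup>/\<^sup>2\<close> and vanishes at \<open>m = 0\<close>. Parseval then bounds the
  sum by \<open>q\<^sup>d\<^sup>/\<^sup>2 |A| - |A|\<^sup>2 / q\<^sup>d\<^sup>/\<^sup>2\<close>. The sum is \<open>SQ A\<close> minus the number of pairs with \<open>\<eta> = -1\<close>,
  and these two counts add up to at most \<open>|A|\<^sup>2 - |A|\<close>.
\<close>

subsection \<open>The quadratic character\<close>

lemma of_nat_CARD_eq_0: "of_nat CARD('a::{ring_1,finite}) = (0::'a)"
proof -
  have "(\<Sum>x\<in>(UNIV::'a set). x + 1) = (\<Sum>x\<in>UNIV. x)"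
    by (rule sum.reindex_bij_witness[of _ "\<lambda>x. x - 1" "\<lambda>x. x + 1"]) auto
  then show ?thesis
    by (simp add: sum.distrib)
qed

lemma two_neq_zero_if_odd_CARD:
  assumes "odd CARD('a::{ring_1,finite})"
  shows "(2::'a) \<noteq> 0"
proof
  assume two: "(2::'a) = 0"
  obtain k where "CARD('a) = 2 * k + 1"
    using assms oddE by blast
  then have "(0::'a) = of_nat (2 * k + 1)"
    by (metis of_nat_CARD_eq_0)
  also have "\<dots> = 1"
    by (simp add: two)
  finally show False
    by simp
qed

lemma sum_comp_eq_sum_card_fiber:
  fixes h :: "'b::finite \<Rightarrow> 'c::finite" and F :: "'c \<Rightarrow> 'r::comm_semiring_1"
  shows "(\<Sum>x\<in>UNIV. F (h x)) = (\<Sum>t\<in>UNIV. of_nat (card {x. h x = t}) * F t)"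
  by (subst sum.group[of UNIV UNIV h, symmetric]) auto

lemma qchar_0 [simp]: "qchar 0 = 0"
  by (simp add: qchar_def)

lemma of_int_qchar: "of_int (qchar a) = of_bool (qchar a = 1) - of_bool (qchar a = -1)"
  by (simp add: qchar_def)

lemma abs_qchar_le_1: "\<bar>qchar a\<bar> \<le> 1"
  by (simp add: qchar_def)

lemma qchar_eq_1_or_minus_1: "a \<noteq> 0 \<Longrightarrow> qchar a = 1 \<or> qchar a = -1"
  by (simp add: qchar_def)

lemma qchar_eq_1_iff: "qchar a = 1 \<longleftrightarrow> (\<exists>c. c \<noteq> 0 \<and> a = c * c)"
  by (auto simp: qchar_def)

lemma qchar_square: "b \<noteq> 0 \<Longrightarrow> qchar (b * b) = 1"
  unfolding qchar_eq_1_iff by blast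

lemma qchar_1 [simp]: "qchar 1 = 1"
  using qchar_square[of 1] by simp

lemma qchar_mult_square:
  assumes "b \<noteq> 0"
  shows "qchar (a * (b * b)) = qchar a"
proof -
  have "(\<exists>c. c * c = a * (b * b)) \<longleftrightarrow> (\<exists>c. c * c = a)"
  proof
    assume "\<exists>c. c * c = a * (b * b)"
    then obtain c where "c * c = a * (b * b)" by blast
    then have "(c / b) * (c / b) = a"
      using assms by (simp add: field_simps)
    then show "\<exists>c. c * c = a" by blast
  next
    assume "\<exists>c. c * c = a"
    then obtain c where "c * c = a" by blast
    then have "(c * b) * (c * b) = a * (b * b)"
      by (simp add: algebra_simps)
    then show "\<exists>c. c * c = a * (b * b)" by blast
  qed
  then show ?thesis
    using assms by (simp add: qchar_def)
qed

lemma card_square_roots: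
  fixes t :: "'a::{field,finite}"
  assumes "odd CARD('a)"
  shows "int (card {w. w * w = t}) = 1 + qchar t"
proof (cases "qchar t = 1")
  case True
  then obtain b where b: "b \<noteq> 0" "t = b * b"
    unfolding qchar_eq_1_iff by blast
  then have "b \<noteq> -b"
    using two_neq_zero_if_odd_CARD[OF assms] by (simp add: eq_neg_iff_add_eq_0 mult_2[symmetric])
  have "{w. w * w = t} = {b, -b}"
    using b(2) square_eq_iff by blast
  then show ?thesis
    using True \<open>b \<noteq> -b\<close> by simp
next
  case nonsquare: False
  show ?thesis
  proof (cases "t = 0")
    case False
    have "w * w \<noteq> t" for w
      using False nonsquare qchar_square by (metis mult_zero_left)
    then have "{w. w * w = t} = {}"
      by blast
    moreover have "qchar t = -1"
      using False nonsquare qchar_eq_1_or_minus_1 by blast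
    ultimately show ?thesis
      by simp
  qed simp
qed

lemma sum_qchar:
  assumes "odd CARD('a::{field,finite})"
  shows "(\<Sum>t\<in>(UNIV::'a set). qchar t) = 0"
proof -
  have "int CARD('a) = (\<Sum>t\<in>(UNIV::'a set). of_nat (card {w::'a. w * w = t}) * 1)"
    using sum_comp_eq_sum_card_fiber[of "\<lambda>_. 1::int" "\<lambda>w::'a. w * w"] by simp
  also have "\<dots> = (\<Sum>t\<in>(UNIV::'a set). 1 + qchar t)"
    using card_square_roots[OF assms] by simp
  finally show ?thesis
    by (simp add: sum.distrib)
qed

lemma card_squares_eq_card_nonsquares:
  assumes "odd CARD('a::{field,finite})"
  shows "card {t::'a. qchar t = 1} = card {t::'a. qchar t = -1}"
proof -
  have "(\<Sum>t\<in>(UNIV::'a set). qchar t) = (\<Sum>t\<in>(UNIV::'a set). of_bool (qchar t = 1) - of_bool (qchar t = -1))"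
    by (rule sum.cong) (auto simp: qchar_def)
  then show ?thesis
    using sum_qchar[OF assms] by (simp add: sum_subtractf Collect_conv_if)
qed

text \<open>Multiplication by a non-square maps the non-zero squares injectively into the
  equally many non-squares, hence onto them.\<close>
lemma qchar_mult_nonsquares:
  fixes a b :: "'a::{field,finite}"
  assumes "odd CARD('a)" and a: "qchar a = -1" and b: "qchar b = -1"
  shows "qchar (a * b) = 1"
proof -
  let ?S = "{t::'a. qchar t = 1}" and ?N = "{t::'a. qchar t = -1}"
  have "a \<noteq> 0"
    using a by (cases "a = 0") simp_all
  have "(\<lambda>s. a * s) ` ?S \<subseteq> ?N"
  proof
    fix x assume "x \<in> (\<lambda>s. a * s) ` ?S"
    then obtain s where x: "x = a * s" and "qchar s = 1"
      by blast
    then obtain c where "c \<noteq> 0" "s = c * c"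
      unfolding qchar_eq_1_iff by blast
    have "qchar x = qchar a"
      unfolding x \<open>s = c * c\<close> by (rule qchar_mult_square[OF \<open>c \<noteq> 0\<close>])
    then show "x \<in> ?N"
      using a by simp
  qed
  moreover have "card ((\<lambda>s. a * s) ` ?S) = card ?N"
  proof -
    have "inj_on (\<lambda>s. a * s) ?S"
      using \<open>a \<noteq> 0\<close> by (simp add: inj_on_def)
    then show ?thesis
      using card_squares_eq_card_nonsquares[OF assms(1)] by (simp add: card_image)
  qed
  ultimately have "(\<lambda>s. a * s) ` ?S = ?N"
    by (intro card_subset_eq) simp_all
  then obtain s where b_eq: "b = a * s" and "qchar s = 1"
    using b by blast
  then obtain c where "c \<noteq> 0" "s = c * c"
    unfolding qchar_eq_1_iff by blast
  then have "a * b = (a * c) * (a * c)"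
    unfolding b_eq by (simp add: algebra_simps)
  then show ?thesis
    using \<open>a \<noteq> 0\<close> \<open>c \<noteq> 0\<close> qchar_square by (metis no_zero_divisors)
qed

lemma qchar_mult:
  fixes a b :: "'a::{field,finite}"
  assumes "odd CARD('a)"
  shows "qchar (a * b) = qchar a * qchar b"
proof -
  have square: "qchar (a * b) = qchar a * qchar b" if b: "qchar b = 1" for a b :: 'a
  proof -
    obtain c where "c \<noteq> 0" "b = c * c"
      using b unfolding qchar_eq_1_iff by blast
    then show ?thesis
      using b by (simp add: qchar_mult_square)
  qed
  consider "a = 0" | "b = 0" | (square_left) "qchar a = 1" | (square_right) "qchar b = 1"
    | (nonsquares) "qchar a = -1" "qchar b = -1"
    using qchar_eq_1_or_minus_1 by blast
  then show ?thesis
  proof cases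
    case square_left
    then show ?thesis
      using square[OF square_left, of b] by (simp add: mult.commute)
  next
    case square_right
    then show ?thesis
      by (rule square)
  next
    case nonsquares
    then show ?thesis
      by (simp add: qchar_mult_nonsquares[OF assms])
  qed simp_all
qed

lemma qchar_divide:
  fixes a b :: "'a::{field,finite}"
  assumes "odd CARD('a)"
  shows "qchar (a / b) = qchar a * qchar b"
proof (cases "b = 0")
  case False
  have "qchar (a / b) = qchar (a * b * ((1 / b) * (1 / b)))"
    using False by (simp add: field_simps)
  also have "\<dots> = qchar (a * b)"
    using False by (intro qchar_mult_square) simp
  also have "\<dots> = qchar a * qchar b"
    by (rule qchar_mult[OF assms])
  finally show ?thesis .
qed simp

subsection \<open>Additive characters\<close>

locale additive_character =
  fixes \<psi> :: "'a::{field,finite} \<Rightarrow> complex"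
  assumes psi_add: "\<psi> (x + y) = \<psi> x * \<psi> y"
    and norm_psi: "norm (\<psi> x) = 1"
    and psi_nontrivial: "\<exists>a. \<psi> a \<noteq> 1"
begin

lemma psi_0 [simp]: "\<psi> 0 = 1"
  using psi_add[of 0 0] norm_psi[of 0] by (metis mult_cancel_left1 norm_zero zero_neq_one add_0)

lemma psi_minus: "\<psi> (- x) = cnj (\<psi> x)"
proof -
  have "\<psi> (- x) * \<psi> x = 1"
    using psi_add[of "- x" x] by simp
  moreover have "cnj (\<psi> x) * \<psi> x = 1"
    using complex_norm_square[of "\<psi> x"] norm_psi[of x] by (simp add: mult.commute)
  ultimately show ?thesis
    using norm_psi[of x] by (metis mult_cancel_right norm_zero zero_neq_one)
qed

lemma psi_diff: "\<psi> (x - y) = \<psi> x * cnj (\<psi> y)"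
  using psi_add[of x "- y"] by (simp add: psi_minus)

lemma psi_sum: "\<psi> (sum f I) = (\<Prod>i\<in>I. \<psi> (f i))"
  by (induction I rule: infinite_finite_induct) (auto simp: psi_add)

lemma sum_psi_mult: "(\<Sum>t\<in>UNIV. \<psi> (c * t)) = (if c = 0 then of_nat CARD('a) else 0)"
proof (cases "c = 0")
  case False
  obtain a where "\<psi> a \<noteq> 1"
    using psi_nontrivial by blast
  have c_reindex: "(\<Sum>t\<in>UNIV. \<psi> (c * t)) = (\<Sum>t\<in>UNIV. \<psi> t)"
    by (rule sum.reindex_bij_witness[where i="\<lambda>t. t / c" and j="\<lambda>t. c * t"]) (use False in auto)
  have "(\<Sum>t\<in>UNIV. \<psi> t) = (\<Sum>t\<in>UNIV. \<psi> (a + t))"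
    by (rule sum.reindex_bij_witness[where i="\<lambda>t. a + t" and j="\<lambda>t. t - a"]) auto
  also have "\<dots> = \<psi> a * (\<Sum>t\<in>UNIV. \<psi> t)"
    by (simp add: psi_add sum_distrib_left)
  finally have "\<psi> a * (\<Sum>t\<in>UNIV. \<psi> t) = (\<Sum>t\<in>UNIV. \<psi> t)"
    by simp
  then have "(\<Sum>t\<in>UNIV. \<psi> t) = 0"
    using \<open>\<psi> a \<noteq> 1\<close> by (simp add: mult_cancel_right2)
  with c_reindex show ?thesis
    using False by simp
qed simp

end

lemma group_closure_of_nat_mult_cancel:
  fixes g :: "'a::comm_ring_1"
  assumes "prime CHAR('a)" and "\<not> CHAR('a) dvd j" and "of_nat j * g \<in> group_closure S"
  shows "g \<in> group_closure S"
proof -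
  have "j \<noteq> 0"
    using assms(2) by (metis dvd_0_right)
  have "coprime j CHAR('a)"
    using assms(1,2) prime_imp_coprime coprime_commute by blast
  then obtain i k where "j * i = CHAR('a) * k + 1"
    using bezout_nat[OF \<open>j \<noteq> 0\<close>, of "CHAR('a)"] by auto
  then have "of_nat i * (of_nat j * g) = (of_nat (CHAR('a) * k + 1) :: 'a) * g"
    by (metis mult.assoc mult.commute of_nat_mult)
  also have "\<dots> = g"
    by simp
  finally show ?thesis
    using group_closure_scalar_mult_left[OF assms(3), of i] by simp
qed

lemma prime_CHAR_finite_field: "prime CHAR('a::{field,finite})"
  by (simp add: finite_imp_CHAR_pos prime_CHAR_semidom)

lemma of_nat_mod_CHAR: "(of_nat (n mod CHAR('a)) :: 'a::semiring_1) = of_nat n"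
proof -
  have "(of_nat n :: 'a) = of_nat (CHAR('a) * (n div CHAR('a)) + n mod CHAR('a))"
    by (simp only: mult_div_mod_eq)
  also have "\<dots> = of_nat (n mod CHAR('a))"
    by (simp only: of_nat_add of_nat_mult of_nat_CHAR mult_zero_left add_0)
  finally show ?thesis
    by (rule sym)
qed

lemma of_nat_CHAR_minus_1_mult:
  assumes "CHAR('a::ring_1) > 0"
  shows "of_nat ((CHAR('a) - 1) * j) = - (of_nat j :: 'a)"
proof -
  have "(CHAR('a) - 1) * j + j = CHAR('a) * j"
    using assms by (cases "CHAR('a)") simp_all
  then have "(of_nat ((CHAR('a) - 1) * j + j) :: 'a) = of_nat (CHAR('a) * j)"
    by (simp only:)
  then have "of_nat ((CHAR('a) - 1) * j) + (of_nat j :: 'a) = 0"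
    by (simp only: of_nat_add of_nat_mult of_nat_CHAR mult_zero_left)
  then show ?thesis
    by (simp add: eq_neg_iff_add_eq_0)
qed

lemma group_closure_subgroup_plus_multiples:
  fixes g :: "'a::comm_ring_1"
  assumes "CHAR('a) > 0" and H: "group_closure H = H"
  shows "group_closure {x. \<exists>k. x - of_nat k * g \<in> H} = {x. \<exists>k. x - of_nat k * g \<in> H}"
    (is "group_closure ?H' = ?H'")
proof
  show "group_closure ?H' \<subseteq> ?H'"
  proof
    fix x assume "x \<in> group_closure ?H'"
    then show "x \<in> ?H'"
    proof induction
      case (base s)
      have "0 \<in> H"
        using H zero_in_group_closure by metis
      with base show ?case
        by (auto intro: exI[of _ 0])
    next
      case (diff s t)
      then obtain k j where "s - of_nat k * g \<in> H" "t - of_nat j * g \<in> H"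
        by auto
      then have "(s - of_nat k * g) - (t - of_nat j * g) \<in> H"
        by (metis H group_closure.diff)
      \<comment> \<open>\<open>(CHAR('a) - 1) * j\<close> plays the role of \<open>-j\<close> among natural coefficients\<close>
      moreover have "(s - t) - of_nat (k + (CHAR('a) - 1) * j) * g
          = (s - of_nat k * g) - (t - of_nat j * g)"
        unfolding of_nat_add of_nat_CHAR_minus_1_mult[OF assms(1)] by (simp add: algebra_simps)
      ultimately have "(s - t) - of_nat (k + (CHAR('a) - 1) * j) * g \<in> H"
        by (simp only:)
      then show ?case
        by blast
    qed
  qed
qed (auto intro: group_closure.base)

text \<open>Take a proper additive subgroup \<open>H\<close> that is maximal under inclusion and some \<open>g \<notin> H\<close>; the
  subgroup generated by \<open>H\<close> and \<open>g\<close> is everything.\<close>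
lemma exists_subgroup_with_cyclic_quotient:
  obtains H and g :: "'a::{field,finite}"
  where "group_closure H = H" and "g \<notin> H" and "\<And>x. \<exists>k. x - of_nat k * g \<in> H"
proof -
  let ?S = "{H::'a set. group_closure H = H \<and> H \<noteq> UNIV}"
  have "group_closure {0::'a} = {0}"
    using group_closure_insert_zero[of "{}"] by simp
  moreover have "{0::'a} \<noteq> UNIV"
    by (metis UNIV_I singletonD zero_neq_one)
  ultimately have "{0} \<in> ?S"
    by simp
  then have "?S \<noteq> {}"
    by (metis empty_iff)
  then obtain H where H: "H \<in> ?S" and maximal: "\<forall>H'\<in>?S. H \<subseteq> H' \<longrightarrow> H = H'"
    using finite_has_maximal[of ?S] by auto
  then have H_sub: "group_closure H = H" and "H \<noteq> UNIV"
    by auto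
  then obtain g where "g \<notin> H"
    by blast
  let ?H' = "{x. \<exists>k. x - of_nat k * g \<in> H}"
  have "0 \<in> H"
    using H_sub zero_in_group_closure by metis
  have "group_closure ?H' = ?H'"
    by (rule group_closure_subgroup_plus_multiples[OF _ H_sub]) (simp add: finite_imp_CHAR_pos)
  moreover have "H \<subseteq> ?H'"
    by (auto intro: exI[of _ 0])
  moreover have "g \<in> ?H'"
    using \<open>0 \<in> H\<close> by (auto intro: exI[of _ 1])
  ultimately have "?H' = UNIV"
    using maximal \<open>g \<notin> H\<close> by blast
  then have "x \<in> ?H'" for x
    by simp
  then have "\<exists>k. x - of_nat k * g \<in> H" for x
    by simp
  then show ?thesis
    using that H_sub \<open>g \<notin> H\<close> by blast
qed

lemma coefficient_unique_mod_subgroup: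
  fixes g :: "'a::{field,finite}"
  assumes H: "group_closure H = H" and "g \<notin> H"
    and "k < CHAR('a)" "l < CHAR('a)" "x - of_nat k * g \<in> H" "x - of_nat l * g \<in> H"
  shows "k = l"
proof -
  have False if "k < l" "l < CHAR('a)" "x - of_nat k * g \<in> H" "x - of_nat l * g \<in> H" for k l
  proof -
    have "(x - of_nat k * g) - (x - of_nat l * g) \<in> H"
      using that(3,4) by (metis H group_closure.diff)
    then have "of_nat (l - k) * g \<in> group_closure H"
      using that(1) H by (simp add: of_nat_diff algebra_simps)
    moreover have "\<not> CHAR('a) dvd (l - k)"
      using that(1,2) by (auto dest: dvd_imp_le)
    ultimately show False
      using group_closure_of_nat_mult_cancel[OF prime_CHAR_finite_field] H \<open>g \<notin> H\<close> by metis
  qed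
  then show ?thesis
    using assms(3-6) by (metis linorder_neqE_nat)
qed

lemma exists_additive_functional:
  obtains L :: "'a::{field,finite} \<Rightarrow> nat" and g
  where "\<And>x y. L (x + y) = (L x + L y) mod CHAR('a)" and "L g = 1"
proof -
  let ?p = "CHAR('a)"
  obtain H and g :: 'a where H: "group_closure H = H" and "g \<notin> H"
    and decompose: "\<And>x. \<exists>k. x - of_nat k * g \<in> H"
    using exists_subgroup_with_cyclic_quotient by blast
  have "?p > 1"
    using prime_CHAR_finite_field by (rule prime_gt_1_nat)
  define L where "L x = (THE k. k < ?p \<and> x - of_nat k * g \<in> H)" for x
  have L_eqI: "L x = k" if "k < ?p" "x - of_nat k * g \<in> H" for x k
    unfolding L_def using that coefficient_unique_mod_subgroup[OF H \<open>g \<notin> H\<close>] by blast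
  have L: "L x < ?p \<and> x - of_nat (L x) * g \<in> H" for x
  proof -
    obtain k where "x - of_nat k * g \<in> H"
      using decompose by blast
    then have "x - of_nat (k mod ?p) * g \<in> H"
      by (simp add: of_nat_mod_CHAR)
    then show ?thesis
      using L_eqI[of "k mod ?p" x] \<open>?p > 1\<close> by simp
  qed
  have "L (x + y) = (L x + L y) mod ?p" for x y
  proof (rule L_eqI)
    have "(x - of_nat (L x) * g) + (y - of_nat (L y) * g) \<in> H"
      using L[of x] L[of y] H group_closure_add by metis
    then show "x + y - of_nat ((L x + L y) mod ?p) * g \<in> H"
      by (simp add: of_nat_mod_CHAR algebra_simps)
  qed (use \<open>?p > 1\<close> in simp)
  moreover have "L g = 1"
  proof (rule L_eqI)
    show "g - of_nat 1 * g \<in> H"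
      using H zero_in_group_closure by (metis cancel_comm_monoid_add_class.diff_cancel mult_1 of_nat_1)
  qed (use \<open>?p > 1\<close> in simp)
  ultimately show ?thesis
    using that by blast
qed

lemma power_mod_eq_power:
  fixes z :: "'a::monoid_mult"
  assumes "z ^ p = 1"
  shows "z ^ (n mod p) = z ^ n"
proof -
  have "z ^ n = z ^ (p * (n div p) + n mod p)"
    by (simp only: mult_div_mod_eq)
  also have "\<dots> = z ^ (n mod p)"
    by (simp only: power_add power_mult assms power_one mult_1_left)
  finally show ?thesis
    by (rule sym)
qed

lemma cis_2pi_divide_neq_1:
  assumes "n > 1"
  shows "cis (2 * pi / real n) \<noteq> 1"
proof
  assume "cis (2 * pi / real n) = 1"
  then have "cos (2 * pi / real n) = 1"
    by (metis Re_complex_of_real cis.sel(1) of_real_1)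
  then obtain k :: int where "2 * pi / real n = k * 2 * pi"
    by (auto simp: cos_one_2pi_int)
  then have "real_of_int (k * int n) * (2 * pi) = 1 * (2 * pi)"
    using assms by (simp add: field_simps)
  then have "k * int n = 1"
    by (simp only: mult_cancel_right pi_neq_zero of_int_eq_1_iff) simp
  then show False
    using assms by (simp add: zmult_eq_1_iff)
qed

lemma exists_additive_character: "\<exists>\<psi> :: 'a::{field,finite} \<Rightarrow> complex. additive_character \<psi>"
proof -
  obtain L :: "'a \<Rightarrow> nat" and g where L_add: "\<And>x y. L (x + y) = (L x + L y) mod CHAR('a)"
    and "L g = 1"
    using exists_additive_functional by blast
  have "CHAR('a) > 1"
    using prime_CHAR_finite_field by (rule prime_gt_1_nat)
  define \<omega> where "\<omega> = cis (2 * pi / CHAR('a))"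
  have "\<omega> ^ CHAR('a) = 1"
    using \<open>CHAR('a) > 1\<close> by (simp add: \<omega>_def DeMoivre)
  have "additive_character (\<lambda>x. \<omega> ^ L x)"
  proof
    show "\<omega> ^ L (x + y) = \<omega> ^ L x * \<omega> ^ L y" for x y
      by (simp add: L_add power_mod_eq_power[OF \<open>\<omega> ^ CHAR('a) = 1\<close>] power_add)
    show "norm (\<omega> ^ L x) = 1" for x
      by (simp add: \<omega>_def norm_power)
    show "\<exists>a. \<omega> ^ L a \<noteq> 1"
      using \<open>L g = 1\<close> cis_2pi_divide_neq_1[OF \<open>CHAR('a) > 1\<close>] by (intro exI[of _ g]) (simp add: \<omega>_def)
  qed
  then show ?thesis
    by blast
qed

subsection \<open>Fourier analysis on \<open>\<bbbF>\<^sub>q\<^sup>n\<close>\<close>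

definition vdot :: "'a::comm_ring ^ 'n \<Rightarrow> 'a ^ 'n \<Rightarrow> 'a" where
  "vdot m v = (\<Sum>i\<in>UNIV. m $ i * v $ i)"

definition qnorm :: "'a::comm_ring_1 ^ 'n \<Rightarrow> 'a" where
  "qnorm v = (\<Sum>i\<in>UNIV. (v $ i)^2)"

lemma qdist_eq_qnorm: "qdist x y = qnorm (x - y)"
  by (simp add: qdist_def qnorm_def)

lemma qnorm_0 [simp]: "qnorm 0 = 0"
  by (simp add: qnorm_def)

lemma vdot_0_left [simp]: "vdot 0 v = 0"
  by (simp add: vdot_def)

lemma vdot_diff_right: "vdot m (u - v) = vdot m u - vdot m v"
  by (simp add: vdot_def sum_subtractf algebra_simps)

lemma sum_vec_prod:
  fixes f :: "'n::finite \<Rightarrow> 'a::finite \<Rightarrow> 'c::comm_semiring_1"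
  shows "(\<Sum>v\<in>(UNIV::('a ^ 'n) set). \<Prod>i\<in>UNIV. f i (v $ i)) = (\<Prod>i\<in>UNIV. \<Sum>b\<in>UNIV. f i b)"
proof -
  have "(\<Prod>i\<in>UNIV. \<Sum>b\<in>UNIV. f i b) = (\<Sum>g\<in>PiE UNIV (\<lambda>_. UNIV). \<Prod>i\<in>UNIV. f i (g i))"
    by (rule prod_sum_PiE) auto
  also have "\<dots> = (\<Sum>v\<in>(UNIV::('a ^ 'n) set). \<Prod>i\<in>UNIV. f i (v $ i))"
    by (rule sum.reindex_bij_witness[where i=vec_nth and j=vec_lambda])
       (auto simp: vec_lambda_inverse)
  finally show ?thesis
    by simp
qed

lemma sum_swap_outer_to_inner:
  "(\<Sum>z\<in>C. \<Sum>x\<in>A. \<Sum>y\<in>B. g x y z) = (\<Sum>x\<in>A. \<Sum>y\<in>B. \<Sum>z\<in>C. g x y z)"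
  by (subst sum.swap) (simp only: sum.swap[of _ C])

context additive_character
begin

lemma sum_psi_vdot:
  fixes v :: "'a ^ 'n"
  shows "(\<Sum>m\<in>UNIV. \<psi> (vdot m v)) = (if v = 0 then of_nat CARD('a) ^ CARD('n) else 0)"
proof -
  have "(\<Sum>m\<in>UNIV. \<psi> (vdot m v)) = (\<Sum>m\<in>(UNIV::('a ^ 'n) set). \<Prod>i\<in>UNIV. \<psi> (v $ i * m $ i))"
    by (simp add: vdot_def psi_sum mult.commute)
  also have "\<dots> = (\<Prod>i\<in>UNIV. \<Sum>b\<in>UNIV. \<psi> (v $ i * b))"
    by (rule sum_vec_prod)
  also have "\<dots> = (\<Prod>i\<in>UNIV. if v $ i = 0 then of_nat CARD('a) else 0)"
    by (simp add: sum_psi_mult)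
  also have "\<dots> = (if v = 0 then of_nat CARD('a) ^ CARD('n) else 0)"
    by (auto simp: vec_eq_iff)
  finally show ?thesis .
qed

definition fourier :: "('a ^ 'n \<Rightarrow> complex) \<Rightarrow> 'a ^ 'n \<Rightarrow> complex" where
  "fourier f m = (\<Sum>v\<in>UNIV. f v * \<psi> (- vdot m v))"

definition char_sum :: "('a ^ 'n) set \<Rightarrow> 'a ^ 'n \<Rightarrow> complex" where
  "char_sum A m = (\<Sum>x\<in>A. \<psi> (vdot m x))"

lemma fourier_inversion:
  fixes f :: "'a ^ 'n \<Rightarrow> complex"
  shows "(\<Sum>m\<in>UNIV. fourier f m * \<psi> (vdot m v)) = of_nat CARD('a) ^ CARD('n) * f v"
proof -
  have "(\<Sum>m\<in>UNIV. fourier f m * \<psi> (vdot m v)) = (\<Sum>u\<in>UNIV. f u * (\<Sum>m\<in>UNIV. \<psi> (vdot m (v - u))))"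
    unfolding fourier_def sum_distrib_right sum_distrib_left
    by (subst sum.swap) (simp add: vdot_diff_right psi_add[symmetric] algebra_simps)
  also have "\<dots> = of_nat CARD('a) ^ CARD('n) * f v"
    by (simp add: sum_psi_vdot if_distrib cong: if_cong)
  finally show ?thesis .
qed

lemma norm_char_sum_squared:
  "of_real ((cmod (char_sum A m))^2) = (\<Sum>x\<in>A. \<Sum>y\<in>A. \<psi> (vdot m (x - y)))"
  unfolding complex_norm_square char_sum_def cnj_sum sum_product
  by (simp add: vdot_diff_right psi_diff)

lemma sum_pairs_eq_fourier:
  fixes f :: "'a ^ 'n \<Rightarrow> complex"
  shows "(\<Sum>x\<in>A. \<Sum>y\<in>A. f (x - y))
     = (\<Sum>m\<in>UNIV. fourier f m * of_real ((cmod (char_sum A m))^2)) / of_nat CARD('a) ^ CARD('n)"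
proof -
  have "of_nat CARD('a) ^ CARD('n) * (\<Sum>x\<in>A. \<Sum>y\<in>A. f (x - y))
      = (\<Sum>x\<in>A. \<Sum>y\<in>A. \<Sum>m\<in>UNIV. fourier f m * \<psi> (vdot m (x - y)))"
    by (simp add: sum_distrib_left fourier_inversion)
  also have "\<dots> = (\<Sum>m\<in>UNIV. \<Sum>x\<in>A. \<Sum>y\<in>A. fourier f m * \<psi> (vdot m (x - y)))"
    by (rule sum_swap_outer_to_inner[symmetric])
  also have "\<dots> = (\<Sum>m\<in>UNIV. fourier f m * of_real ((cmod (char_sum A m))^2))"
    by (simp only: norm_char_sum_squared sum_distrib_left)
  finally show ?thesis
    by (simp add: field_simps)
qed

lemma parseval:
  fixes A :: "('a ^ 'n) set"
  shows "(\<Sum>m\<in>UNIV. (cmod (char_sum A m))^2) = real CARD('a) ^ CARD('n) * real (card A)"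
proof -
  have "of_real (\<Sum>m\<in>UNIV. (cmod (char_sum A m))^2)
      = (\<Sum>m\<in>UNIV. \<Sum>x\<in>A. \<Sum>y\<in>A. \<psi> (vdot m (x - y)))"
    by (simp only: of_real_sum norm_char_sum_squared)
  also have "\<dots> = (\<Sum>x\<in>A. \<Sum>y\<in>A. \<Sum>m\<in>UNIV. \<psi> (vdot m (x - y)))"
    by (rule sum_swap_outer_to_inner)
  also have "\<dots> = (\<Sum>x\<in>A. \<Sum>y\<in>A. if x = y then of_nat CARD('a) ^ CARD('n) else 0)"
    by (simp add: sum_psi_vdot)
  also have "\<dots> = of_real (real CARD('a) ^ CARD('n) * real (card A))"
    by (simp add: mult.commute)
  finally show ?thesis
    using of_real_eq_iff by blast
qed

lemma char_sum_0 [simp]: "char_sum A 0 = of_nat (card A)"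
  by (simp add: char_sum_def)

lemma norm_sum_pairs_le:
  fixes f :: "'a ^ 'n \<Rightarrow> complex" and A :: "('a ^ 'n) set"
  assumes bound: "\<And>m. cmod (fourier f m) \<le> B" and "fourier f 0 = 0"
  shows "cmod (\<Sum>x\<in>A. \<Sum>y\<in>A. f (x - y))
           \<le> B * (real (card A) - real (card A)^2 / real CARD('a) ^ CARD('n))"
proof -
  let ?N = "\<lambda>m. (cmod (char_sum A m))^2" and ?Q = "real CARD('a) ^ CARD('n)"
  have "cmod (\<Sum>m\<in>UNIV. fourier f m * of_real (?N m)) \<le> (\<Sum>m\<in>UNIV. cmod (fourier f m) * ?N m)"
    by (rule order_trans[OF norm_sum]) (simp add: norm_mult del: of_real_power)
  also have "\<dots> \<le> (\<Sum>m\<in>UNIV. B * ?N m - (if m = 0 then B * ?N 0 else 0))"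
    using bound assms(2) by (intro sum_mono) (simp add: mult_right_mono)
  also have "\<dots> = B * (?Q * real (card A) - real (card A)^2)"
    by (simp add: sum_subtractf sum_distrib_left[symmetric] parseval algebra_simps)
  finally have "cmod (\<Sum>m\<in>UNIV. fourier f m * of_real (?N m)) / ?Q
      \<le> B * (?Q * real (card A) - real (card A)^2) / ?Q"
    by (rule divide_right_mono) simp
  also have "\<dots> = B * (real (card A) - real (card A)^2 / ?Q)"
    by (simp add: field_simps)
  finally show ?thesis
    by (simp add: sum_pairs_eq_fourier norm_divide norm_power)
qed

end

subsection \<open>Quadratic Gauss sums\<close>

locale additive_character_odd = additive_character +
  assumes odd_card: "odd CARD('a)"
begin

lemma two_neq_0 [simp]: "(2::'a) \<noteq> 0"
  by (rule two_neq_zero_if_odd_CARD[OF odd_card])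

lemma four_neq_0 [simp]: "(4::'a) \<noteq> 0"
  using two_neq_0 by (metis mult_2_right mult_eq_0_iff numeral_Bit0)

definition gauss_sum :: complex where
  "gauss_sum = (\<Sum>t\<in>UNIV. of_int (qchar t) * \<psi> t)"

lemma sum_of_int_qchar: "(\<Sum>t\<in>UNIV. (of_int (qchar (t::'a)) :: complex)) = 0"
  using sum_qchar[OF odd_card] by (metis of_int_0 of_int_sum)

lemma sum_qchar_psi_mult:
  "(\<Sum>s\<in>UNIV. of_int (qchar s) * \<psi> (c * s)) = of_int (qchar c) * gauss_sum"
proof (cases "c = 0")
  case False
  have "(\<Sum>s\<in>UNIV. of_int (qchar s) * \<psi> (c * s)) = (\<Sum>u\<in>UNIV. of_int (qchar (u / c)) * \<psi> u)"
    by (rule sum.reindex_bij_witness[where i="\<lambda>u. u / c" and j="\<lambda>s. c * s"]) (use False in auto)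
  also have "\<dots> = of_int (qchar c) * gauss_sum"
    by (simp add: gauss_sum_def qchar_divide[OF odd_card] sum_distrib_left algebra_simps)
  finally show ?thesis .
qed (simp add: sum_of_int_qchar flip: sum_distrib_right)

text \<open>For \<open>c \<noteq> 0\<close>, \<open>s \<mapsto> c / s\<close> is an involution of the field, including \<open>c / 0 = 0\<close>.\<close>
lemma sum_qchar_psi_divide:
  "(\<Sum>s\<in>UNIV. of_int (qchar s) * \<psi> (c / s)) = of_int (qchar c) * gauss_sum"
proof (cases "c = 0")
  case False
  have "(\<Sum>s\<in>UNIV. of_int (qchar s) * \<psi> (c / s)) = (\<Sum>u\<in>UNIV. of_int (qchar (c / u)) * \<psi> u)"
    by (rule sum.reindex_bij_witness[where i="\<lambda>u. c / u" and j="\<lambda>s. c / s"]) (use False in auto)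
  also have "\<dots> = of_int (qchar c) * gauss_sum"
    by (simp add: gauss_sum_def qchar_divide[OF odd_card] sum_distrib_left algebra_simps)
  finally show ?thesis .
qed (simp add: sum_of_int_qchar flip: sum_distrib_right)

lemma sum_psi_square:
  assumes "r \<noteq> 0"
  shows "(\<Sum>x\<in>UNIV. \<psi> (r * x^2)) = of_int (qchar r) * gauss_sum"
proof -
  have "(\<Sum>x\<in>UNIV. \<psi> (r * x^2)) = (\<Sum>t\<in>UNIV. of_nat (card {x::'a. x * x = t}) * \<psi> (r * t))"
    unfolding power2_eq_square by (rule sum_comp_eq_sum_card_fiber)
  also have "\<dots> = (\<Sum>t\<in>UNIV. (1 + of_int (qchar t)) * \<psi> (r * t))"
  proof (rule sum.cong[OF refl])
    fix t :: 'a
    have "(of_nat (card {x. x * x = t}) :: complex) = of_int (int (card {x. x * x = t}))"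
      by simp
    also have "\<dots> = 1 + of_int (qchar t)"
      by (simp add: card_square_roots[OF odd_card])
    finally show "of_nat (card {x. x * x = t}) * \<psi> (r * t) = (1 + of_int (qchar t)) * \<psi> (r * t)"
      by simp
  qed
  also have "\<dots> = (\<Sum>t\<in>UNIV. \<psi> (r * t)) + (\<Sum>t\<in>UNIV. of_int (qchar t) * \<psi> (r * t))"
    by (simp add: distrib_right sum.distrib)
  also have "\<dots> = of_int (qchar r) * gauss_sum"
    using assms by (simp add: sum_psi_mult sum_qchar_psi_mult)
  finally show ?thesis .
qed

text \<open>\<open>|G|\<^sup>2 = \<Sum>\<^sub>x\<^sub>,\<^sub>y \<psi>(x\<^sup>2 - y\<^sup>2)\<close>, and \<open>(x, y) \<mapsto> (x + y, x - y)\<close> is a bijection since \<open>2 \<noteq> 0\<close>.\<close>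
lemma gauss_sum_mult_cnj: "gauss_sum * cnj gauss_sum = of_nat CARD('a)"
proof -
  have "gauss_sum * cnj gauss_sum = (\<Sum>x\<in>UNIV. \<psi> (x^2)) * cnj (\<Sum>y\<in>UNIV. \<psi> (y^2))"
    using sum_psi_square[of 1] by simp
  also have "\<dots> = (\<Sum>(x, y)\<in>UNIV. \<psi> ((x + y) * (x - y)))"
    by (simp add: sum_product cnj_sum sum.cartesian_product psi_diff[symmetric] power2_eq_square
        algebra_simps)
  also have "\<dots> = (\<Sum>(u, v)\<in>UNIV. \<psi> (u * v))"
    by (rule sum.reindex_bij_witness[where i="\<lambda>(u, v). ((u + v) / 2, (u - v) / 2)"
          and j="\<lambda>(x, y). (x + y, x - y)"])
       (auto simp: field_simps)
  also have "\<dots> = of_nat CARD('a)"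
    unfolding UNIV_Times_UNIV[symmetric] sum.cartesian_product' by (simp add: sum_psi_mult)
  finally show ?thesis .
qed

lemma norm_gauss_sum: "cmod gauss_sum = sqrt (real CARD('a))"
proof -
  have "complex_of_real ((cmod gauss_sum)^2) = complex_of_real (real CARD('a))"
    unfolding complex_norm_square gauss_sum_mult_cnj by simp
  then have "(cmod gauss_sum)^2 = real CARD('a)"
    by (simp only: of_real_eq_iff)
  then show ?thesis
    by (metis abs_norm_cancel real_sqrt_abs)
qed

lemma sum_psi_quadratic:
  assumes "s \<noteq> 0"
  shows "(\<Sum>b\<in>UNIV. \<psi> (s * b^2 - c * b)) = \<psi> (- (c^2 / (4 * s))) * (of_int (qchar s) * gauss_sum)"
proof -
  define w where "w = c / (2 * s)"
  have "2 * s * w = c"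
    using assms by (simp add: w_def)
  moreover have "s * w^2 = c^2 / (4 * s)"
    using assms by (simp add: w_def power2_eq_square field_simps)
  moreover have "s * (b - w)^2 = s * b^2 - (2 * s * w) * b + s * w^2" for b
    by (simp add: power2_eq_square algebra_simps)
  ultimately have complete_square: "s * b^2 - c * b = s * (b - w)^2 + - (c^2 / (4 * s))" for b
    by simp
  have "\<psi> (s * b^2 - c * b) = \<psi> (- (c^2 / (4 * s))) * \<psi> (s * (b - w)^2)" for b
    unfolding complete_square psi_add by (rule mult.commute)
  then have "(\<Sum>b\<in>UNIV. \<psi> (s * b^2 - c * b))
      = \<psi> (- (c^2 / (4 * s))) * (\<Sum>b\<in>UNIV. \<psi> (s * (b - w)^2))"
    by (simp add: sum_distrib_left)
  also have "(\<Sum>b\<in>UNIV. \<psi> (s * (b - w)^2)) = (\<Sum>b\<in>UNIV. \<psi> (s * b^2))"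
    by (rule sum.reindex_bij_witness[where i="\<lambda>b. b + w" and j="\<lambda>b. b - w"]) auto
  finally show ?thesis
    using sum_psi_square[OF assms] by simp
qed

lemma sum_psi_qnorm_vdot:
  fixes m :: "'a ^ 'n"
  assumes "s \<noteq> 0"
  shows "(\<Sum>v\<in>UNIV. \<psi> (s * qnorm v - vdot m v))
           = \<psi> (- (qnorm m / (4 * s))) * (of_int (qchar s) * gauss_sum) ^ CARD('n)"
proof -
  have "s * qnorm v - vdot m v = (\<Sum>i\<in>UNIV. s * (v $ i)^2 - m $ i * v $ i)" for v
    by (simp add: qnorm_def vdot_def sum_distrib_left sum_subtractf)
  then have "(\<Sum>v\<in>UNIV. \<psi> (s * qnorm v - vdot m v))
      = (\<Sum>v\<in>(UNIV::('a ^ 'n) set). \<Prod>i\<in>UNIV. \<psi> (s * (v $ i)^2 - m $ i * v $ i))"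
    by (simp add: psi_sum)
  also have "\<dots> = (\<Prod>i\<in>UNIV. \<Sum>b\<in>UNIV. \<psi> (s * b^2 - m $ i * b))"
    by (rule sum_vec_prod)
  also have "\<dots> = (\<Prod>i\<in>UNIV. \<psi> (- ((m $ i)^2 / (4 * s)))) * (of_int (qchar s) * gauss_sum) ^ CARD('n)"
    by (simp add: sum_psi_quadratic[OF assms] prod.distrib)
  also have "(\<Prod>i\<in>UNIV. \<psi> (- ((m $ i)^2 / (4 * s)))) = \<psi> (\<Sum>i\<in>UNIV. - ((m $ i)^2 / (4 * s)))"
    by (rule psi_sum[symmetric])
  also have "\<dots> = \<psi> (- (qnorm m / (4 * s)))"
    by (simp add: qnorm_def sum_divide_distrib sum_negf)
  finally show ?thesis .
qed

text \<open>Multiplying by \<open>G\<close> and expanding \<open>\<eta>(qnorm v) G = \<Sum>\<^sub>s \<eta>(s) \<psi>(s qnorm v)\<close> turns the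
  transform into products of one-variable Gauss sums; for even \<open>n\<close> the signs \<open>\<eta>(s)\<^sup>n\<close> drop out.\<close>
lemma fourier_qchar_qnorm:
  fixes m :: "'a ^ 'n"
  assumes "even CARD('n)"
  shows "fourier (\<lambda>v. of_int (qchar (qnorm v))) m
           = of_int (qchar (- (qnorm m / 4))) * gauss_sum ^ CARD('n)"
proof -
  let ?G = gauss_sum and ?n = "CARD('n)"
  have "?G \<noteq> 0"
    using gauss_sum_mult_cnj by auto
  have even_power: "(of_int (qchar s) * ?G) ^ ?n = ?G ^ ?n" if "s \<noteq> 0" for s :: 'a
    using qchar_eq_1_or_minus_1[OF that] assms by (auto simp: power_mult_distrib)
  have "?G * fourier (\<lambda>v. of_int (qchar (qnorm v))) m
      = (\<Sum>v\<in>UNIV. (\<Sum>s\<in>UNIV. of_int (qchar s) * \<psi> (qnorm v * s)) * \<psi> (- vdot m v))"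
    unfolding fourier_def sum_distrib_left
    by (rule sum.cong[OF refl], subst sum_qchar_psi_mult) (simp add: mult_ac)
  also have "\<dots> = (\<Sum>s\<in>UNIV. of_int (qchar s) * (\<Sum>v\<in>UNIV. \<psi> (s * qnorm v - vdot m v)))"
    unfolding sum_distrib_left sum_distrib_right
    by (subst sum.swap) (simp add: psi_diff psi_minus mult.commute[of "qnorm _"] mult_ac)
  also have "\<dots> = (\<Sum>s\<in>UNIV. of_int (qchar s) * (\<psi> (- (qnorm m / (4 * s))) * ?G ^ ?n))"
  proof (rule sum.cong[OF refl])
    fix s :: 'a
    show "of_int (qchar s) * (\<Sum>v\<in>UNIV. \<psi> (s * qnorm v - vdot m v))
        = of_int (qchar s) * (\<psi> (- (qnorm m / (4 * s))) * ?G ^ ?n)"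
      by (cases "s = 0") (simp_all add: sum_psi_qnorm_vdot even_power)
  qed
  also have "\<dots> = ?G ^ ?n * (\<Sum>s\<in>UNIV. of_int (qchar s) * \<psi> (- (qnorm m / 4) / s))"
    by (simp add: sum_distrib_left mult_ac)
  also have "\<dots> = ?G * (of_int (qchar (- (qnorm m / 4))) * ?G ^ ?n)"
    by (subst sum_qchar_psi_divide) (simp add: mult_ac)
  finally show ?thesis
    using \<open>?G \<noteq> 0\<close> by simp
qed

lemma abs_sum_qchar_qdist_le:
  fixes A :: "('a ^ 'n) set"
  assumes "even CARD('n)"
  shows "\<bar>\<Sum>x\<in>A. \<Sum>y\<in>A. real_of_int (qchar (qdist x y))\<bar>
           \<le> real CARD('a) ^ (CARD('n) div 2) * real (card A)
              - real (card A)^2 / real CARD('a) ^ (CARD('n) div 2)"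
proof -
  let ?f = "\<lambda>v::'a ^ 'n. (of_int (qchar (qnorm v)) :: complex)"
  let ?h = "real CARD('a) ^ (CARD('n) div 2)"
  have h_sq: "?h^2 = real CARD('a) ^ CARD('n)"
    using assms by (simp flip: power_mult)
  have "sqrt (real CARD('a)) ^ CARD('n) = ?h"
    using assms by (metis even_two_times_div_two power_mult real_sqrt_pow2 of_nat_0_le_iff)
  then have "cmod (fourier ?f m) \<le> ?h" for m
    using abs_qchar_le_1[of "- (qnorm m / 4)"]
    by (simp add: fourier_qchar_qnorm[OF assms] norm_mult norm_power norm_gauss_sum mult_left_le_one_le)
  moreover have "fourier ?f 0 = 0"
    by (simp add: fourier_qchar_qnorm[OF assms])
  ultimately have "cmod (\<Sum>x\<in>A. \<Sum>y\<in>A. ?f (x - y))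
      \<le> ?h * (real (card A) - real (card A)^2 / real CARD('a) ^ CARD('n))"
    by (rule norm_sum_pairs_le)
  also have "\<dots> = ?h * real (card A) - real (card A)^2 / ?h"
    by (simp add: flip: h_sq) (simp add: field_simps power2_eq_square)
  moreover have "(\<Sum>x\<in>A. \<Sum>y\<in>A. ?f (x - y)) = of_real (\<Sum>x\<in>A. \<Sum>y\<in>A. real_of_int (qchar (qdist x y)))"
    by (simp add: qdist_eq_qnorm)
  ultimately show ?thesis
    by (metis norm_of_real)
qed

end

subsection \<open>Counting square distances\<close>

lemma SQ_le_sum_qchar:
  fixes A :: "('a::{field,finite} ^ 'n) set"
  shows "2 * real (SQ A)
           \<le> real (card A)^2 - real (card A) + (\<Sum>x\<in>A. \<Sum>y\<in>A. real_of_int (qchar (qdist x y)))"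
proof -
  let ?P = "{(x, y). x \<in> A \<and> y \<in> A \<and> qchar (qdist x y) = 1}"
  let ?N = "{(x, y). x \<in> A \<and> y \<in> A \<and> qchar (qdist x y) = -1}"
  have "(\<Sum>x\<in>A. \<Sum>y\<in>A. real_of_int (qchar (qdist x y)))
      = (\<Sum>p\<in>A \<times> A. of_bool (p \<in> ?P) - of_bool (p \<in> ?N))"
    unfolding sum.cartesian_product
    by (rule sum.cong[OF refl]) (auto simp: of_int_qchar)
  also have "\<dots> = real (card ?P) - real (card ?N)"
    by (simp add: sum_subtractf Int_absorb1 subset_eq flip: Collect_mem_eq)
  finally have sum_eq: "(\<Sum>x\<in>A. \<Sum>y\<in>A. real_of_int (qchar (qdist x y))) = real (card ?P) - real (card ?N)" .
  have "card ?P + card ?N = card (?P \<union> ?N)"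
    by (rule card_Un_disjoint[symmetric]) auto
  also have "\<dots> \<le> card (A \<times> A - (\<lambda>x. (x, x)) ` A)"
    by (rule card_mono) (auto simp: qdist_def)
  also have "\<dots> = card A * card A - card A"
    by (simp add: card_Diff_subset card_cartesian_product card_image inj_on_def image_subset_iff)
  finally have "real (card ?P + card ?N) \<le> real (card A * card A - card A)"
    by (simp only: of_nat_le_iff)
  then have "real (card ?P) + real (card ?N) \<le> real (card A)^2 - real (card A)"
    using le_square[of "card A"] by (simp add: of_nat_diff power2_eq_square)
  moreover have "SQ A = card ?P"
    by (simp add: SQ_def)
  ultimately show ?thesis
    using sum_eq by linarith
qed

theorem lemma6p1:
  fixes A :: "('a::{field,finite} ^ 'n) set"
  assumes "odd (CARD('a))"
    and "even (CARD('n))" and "CARD('n) \<ge> 2"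
  shows "real (SQ A) \<le> real (card A)^2 / 2
           + real (CARD('a)) ^ (CARD('n) div 2) / 2 * real (card A)
           - real (card A)^2 / (2 * real (CARD('a)) ^ (CARD('n) div 2))
           - real (card A) / 2"
proof -
  obtain \<psi> :: "'a \<Rightarrow> complex" where "additive_character \<psi>"
    using exists_additive_character by blast
  then interpret additive_character_odd \<psi>
    using assms(1) by (simp add: additive_character_odd_def additive_character_odd_axioms_def)
  let ?h = "real CARD('a) ^ (CARD('n) div 2)" and ?a = "real (card A)"
  have "2 * real (SQ A) \<le> ?a^2 - ?a + (?h * ?a - ?a^2 / ?h)"
    using SQ_le_sum_qchar[of A] abs_sum_qchar_qdist_le[OF assms(2), of A] by linarith
  then show ?thesis
    by (simp add: field_simps)
qed

end
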